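(* For $k\geq1$, the star $K_{1,k+2}$ has spectator floor $k$ and is minor-minimal among graphs with spectator floor $k$ (no proper minor of it has spectator floor $k$).
   Context: All graphs are finite, have at least one vertex, have no loops, and may have multiple (parallel) edges. A minor of $H$ is any graph obtained from $H$ by a sequence of: deleting an isolated vertex, deleting an edge, contracting an edge that has no edge parallel to it. A unique shortest path is a shortest $u$–$v$ path $P$ such that every $u$–$v$ path with the same number of vertices is identical to $P$, where two paths with different edge sequences are different even if their vertex sequences agree; a single vertex is a unique shortest path. The parade number $\mathrm{usp}(G)$ is the largest number of vertices of a unique shortest path in $G$. The spectator number is $\mathrm{sp}(G)=|V(G)|-\mathrm{usp}(G)$. The spectator floor $\lfloor \mathrm{sp}\rfloor(G)$ is the minimum of $\mathrm{sp}(H)$ over all graphs $H$ of which $G$ is a minor. *)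

theory Defs
  imports Main
begin

text \<open>Finite multigraphs without loops. Vertices and edges are labelled by natural
numbers; every finite multigraph is isomorphic to one of this form.\<close>

record mgraph =
  verts :: "nat set"
  edges :: "nat set"
  endpts :: "nat \<Rightarrow> nat set"

definition wf_graph :: "mgraph \<Rightarrow> bool" where
  "wf_graph G \<longleftrightarrow> finite (verts G) \<and> verts G \<noteq> {} \<and> finite (edges G) \<and>
     (\<forall>e\<in>edges G. endpts G e \<subseteq> verts G \<and> card (endpts G e) = 2)"

definition graph_iso :: "mgraph \<Rightarrow> mgraph \<Rightarrow> bool" where
  "graph_iso G H \<longleftrightarrow> (\<exists>f g. bij_betw f (verts G) (verts H) \<and> bij_betw g (edges G) (edges H) \<and>
     (\<forall>e\<in>edges G. endpts H (g e) = f ` endpts G e))"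

inductive minor_step :: "mgraph \<Rightarrow> mgraph \<Rightarrow> bool" where
  del_vertex: "v \<in> verts H \<Longrightarrow> verts H - {v} \<noteq> {} \<Longrightarrow> (\<forall>e\<in>edges H. v \<notin> endpts H e) \<Longrightarrow>
     minor_step H (H\<lparr>verts := verts H - {v}\<rparr>)"
| del_edge: "e \<in> edges H \<Longrightarrow> minor_step H (H\<lparr>edges := edges H - {e}\<rparr>)"
| contract: "e \<in> edges H \<Longrightarrow> endpts H e = {u, w} \<Longrightarrow> u \<noteq> w \<Longrightarrow>
     (\<forall>f\<in>edges H - {e}. endpts H f \<noteq> endpts H e) \<Longrightarrow>
     minor_step H \<lparr>verts = verts H - {w}, edges = edges H - {e},
        endpts = (\<lambda>f. if w \<in> endpts H f then insert u (endpts H f - {w}) else endpts H f)\<rparr>"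

definition is_minor :: "mgraph \<Rightarrow> mgraph \<Rightarrow> bool" where
  "is_minor G H \<longleftrightarrow> (\<exists>G'. minor_step\<^sup>*\<^sup>* H G' \<and> graph_iso G' G)"

definition is_path :: "mgraph \<Rightarrow> nat list \<Rightarrow> nat list \<Rightarrow> bool" where
  "is_path G vs es \<longleftrightarrow> vs \<noteq> [] \<and> distinct vs \<and> set vs \<subseteq> verts G \<and> set es \<subseteq> edges G \<and>
     length es + 1 = length vs \<and>
     (\<forall>i < length es. endpts G (es ! i) = {vs ! i, vs ! Suc i})"

definition is_uv_path :: "mgraph \<Rightarrow> nat \<Rightarrow> nat \<Rightarrow> nat list \<Rightarrow> nat list \<Rightarrow> bool" where
  "is_uv_path G u v vs es \<longleftrightarrow> is_path G vs es \<and> hd vs = u \<and> last vs = v"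

definition is_usp :: "mgraph \<Rightarrow> nat list \<Rightarrow> nat list \<Rightarrow> bool" where
  "is_usp G vs es \<longleftrightarrow> is_path G vs es \<and>
     (\<forall>vs' es'. is_uv_path G (hd vs) (last vs) vs' es' \<longrightarrow> length vs \<le> length vs') \<and>
     (\<forall>vs' es'. is_uv_path G (hd vs) (last vs) vs' es' \<and> length vs' = length vs \<longrightarrow>
        vs' = vs \<and> es' = es)"

definition usp :: "mgraph \<Rightarrow> nat" where
  "usp G = Max {length vs | vs es. is_usp G vs es}"

definition sp :: "mgraph \<Rightarrow> nat" where
  "sp G = card (verts G) - usp G"

definition sp_floor :: "mgraph \<Rightarrow> nat" where
  "sp_floor G = (LEAST n. \<exists>H. wf_graph H \<and> is_minor G H \<and> sp H = n)"

definition star :: "nat \<Rightarrow> mgraph" where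
  "star m = \<lparr>verts = {0..m}, edges = {1..m}, endpts = (\<lambda>e. {0, e})\<rparr>"

end

theory Submission
  imports Defs "HOL-Library.Transitive_Closure_Table"
begin

text \<open>Lower bound: a K_{1,m} minor of H gives a connected centre set B and disjoint leaf sets
  adjacent to B, and such a structure pulls back along every minor operation. Fix a unique shortest
  path P of H. Leaf sets leaving P supply distinct vertices off P and outside B. Each leaf set inside
  P supplies a position on P adjacent to B; joining the two outermost ones through B gives a walk,
  and as P is a geodesic, every position of P skipped by this walk is paid for by a vertex of the walk
  off P, hence in B. So |P| + m \<le> |V(H)| + 2, i.e. sp H \<ge> m - 2, with equality for the star.

  Minimality: a proper minor of K_{1,k+2} starts by deleting or contracting an edge e. The same graph
  arises by deleting e (and, for a contraction, one of its ends) from the star in which e is moved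
  to hang off another leaf, and that graph has a unique shortest path on four vertices, so its
  spectator number is k - 1.\<close>

definition adj :: "mgraph \<Rightarrow> nat \<Rightarrow> nat \<Rightarrow> bool" where
  "adj H x y \<longleftrightarrow> (\<exists>e\<in>edges H. endpts H e = {x, y})"

definition edges_wf :: "mgraph \<Rightarrow> bool" where
  "edges_wf H \<longleftrightarrow> (\<forall>e\<in>edges H. endpts H e \<subseteq> verts H \<and> card (endpts H e) = 2)"

lemma adj_sym: "adj H x y \<Longrightarrow> adj H y x"
  unfolding adj_def by (auto simp: insert_commute)

lemma adj_in_verts: "edges_wf H \<Longrightarrow> adj H x y \<Longrightarrow> x \<in> verts H \<and> y \<in> verts H"
  unfolding adj_def edges_wf_def by auto

lemma edges_wf_if_wf_graph: "wf_graph H \<Longrightarrow> edges_wf H"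
  unfolding wf_graph_def edges_wf_def by auto

definition merge :: "nat \<Rightarrow> nat \<Rightarrow> nat \<Rightarrow> nat" where
  "merge u w x = (if x = w then u else x)"

lemma contract_endpts_eq_image:
  "(if w \<in> X then insert u (X - {w}) else X) = merge u w ` X"
  unfolding merge_def by auto

lemma edges_wf_minor_step:
  assumes "minor_step H G" "edges_wf H"
  shows "edges_wf G"
  using assms
proof (induction rule: minor_step.induct)
  case (contract e H u w)
  have u: "u \<in> verts H" using contract unfolding edges_wf_def by auto
  have "merge u w ` endpts H f \<subseteq> verts H - {w} \<and> card (merge u w ` endpts H f) = 2"
    if f: "f \<in> edges H - {e}" for f
  proof -
    obtain a b where ab: "endpts H f = {a, b}" "a \<noteq> b" "{a, b} \<subseteq> verts H"
      using f contract.prems unfolding edges_wf_def by (auto simp: card_2_iff)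
    have "{a, b} \<noteq> {u, w}" using f contract.hyps(2,4) ab(1) by auto
    then have "merge u w a \<noteq> merge u w b" using ab(2) contract.hyps(3) by (auto simp: merge_def)
    moreover have "merge u w x \<in> verts H - {w}" if "x \<in> verts H" for x
      using that u contract.hyps(3) by (simp add: merge_def)
    ultimately show ?thesis using ab by auto
  qed
  then show ?case by (simp add: edges_wf_def contract_endpts_eq_image)
qed (auto simp: edges_wf_def)

lemma edges_wf_minor_steps: "minor_step\<^sup>*\<^sup>* H G \<Longrightarrow> edges_wf H \<Longrightarrow> edges_wf G"
  by (induction rule: rtranclp_induct) (auto intro: edges_wf_minor_step)

section \<open>Star models and their pullback along minors\<close>

definition conn_in :: "mgraph \<Rightarrow> nat set \<Rightarrow> nat \<Rightarrow> nat \<Rightarrow> bool" where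
  "conn_in H S a b \<longleftrightarrow> (\<lambda>x y. x \<in> S \<and> y \<in> S \<and> adj H x y)\<^sup>*\<^sup>* a b"

lemma conn_in_mono:
  assumes "conn_in H S a b" "S \<subseteq> S'"
  shows "conn_in H S' a b"
proof -
  have "(\<lambda>x y. x \<in> S \<and> y \<in> S \<and> adj H x y) \<le> (\<lambda>x y. x \<in> S' \<and> y \<in> S' \<and> adj H x y)"
    using assms(2) by auto
  then show ?thesis using assms(1) unfolding conn_in_def by (rule rtranclp_mono[THEN predicate2D])
qed

lemma conn_in_edge: "x \<in> S \<Longrightarrow> y \<in> S \<Longrightarrow> adj H x y \<Longrightarrow> conn_in H S x y"
  unfolding conn_in_def by (rule r_into_rtranclp) simp

lemma conn_in_trans: "conn_in H S a b \<Longrightarrow> conn_in H S b c \<Longrightarrow> conn_in H S a c"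
  unfolding conn_in_def by (rule rtranclp_trans)

text \<open>Unlike branch sets of a minor model, the leaf sets need not be connected: this weaker
  notion pulls back along minor operations and is all that the lower bound on sp uses.\<close>

definition star_model :: "mgraph \<Rightarrow> nat \<Rightarrow> nat set \<Rightarrow> (nat \<Rightarrow> nat set) \<Rightarrow> bool" where
  "star_model H m B L \<longleftrightarrow> B \<subseteq> verts H \<and> (\<forall>a\<in>B. \<forall>b\<in>B. conn_in H B a b) \<and>
     (\<forall>i\<in>{1..m}. L i \<subseteq> verts H \<and> L i \<inter> B = {} \<and> (\<exists>x\<in>L i. \<exists>y\<in>B. adj H x y)) \<and>
     (\<forall>i\<in>{1..m}. \<forall>j\<in>{1..m}. i \<noteq> j \<longrightarrow> L i \<inter> L j = {})"

definition has_star_model :: "mgraph \<Rightarrow> nat \<Rightarrow> bool" where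
  "has_star_model H m \<longleftrightarrow> (\<exists>B L. star_model H m B L)"

lemma star_modelD:
  assumes "star_model H m B L"
  shows "B \<subseteq> verts H" "a \<in> B \<Longrightarrow> b \<in> B \<Longrightarrow> conn_in H B a b"
    and "i \<in> {1..m} \<Longrightarrow> L i \<subseteq> verts H" "i \<in> {1..m} \<Longrightarrow> L i \<inter> B = {}"
    and "i \<in> {1..m} \<Longrightarrow> \<exists>x\<in>L i. \<exists>y\<in>B. adj H x y"
    and "i \<in> {1..m} \<Longrightarrow> j \<in> {1..m} \<Longrightarrow> i \<noteq> j \<Longrightarrow> L i \<inter> L j = {}"
  using assms unfolding star_model_def by blast+

lemma star_model_star: "star_model (star m) m {0} (\<lambda>i. {i})"
  unfolding star_model_def conn_in_def adj_def star_def by auto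

definition minor_map :: "mgraph \<Rightarrow> mgraph \<Rightarrow> (nat \<Rightarrow> nat) \<Rightarrow> bool" where
  "minor_map H G \<pi> \<longleftrightarrow> (\<forall>f\<in>edges G. \<exists>e\<in>edges H. endpts G f = \<pi> ` endpts H e) \<and>
     (\<forall>x\<in>verts H. \<forall>y\<in>verts H. \<pi> x = \<pi> y \<longrightarrow> conn_in H (verts H \<inter> \<pi> -` {\<pi> x}) x y)"

lemma minor_map_id:
  assumes "edges G \<subseteq> edges H" "\<forall>f\<in>edges G. endpts G f = endpts H f"
  shows "minor_map H G id"
  using assms unfolding minor_map_def conn_in_def by auto

lemma minor_map_contract:
  assumes "e \<in> edges H" "endpts H e = {u, w}"
  shows "minor_map H \<lparr>verts = verts H - {w}, edges = edges H - {e},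
      endpts = (\<lambda>f. if w \<in> endpts H f then insert u (endpts H f - {w}) else endpts H f)\<rparr> (merge u w)"
  unfolding minor_map_def
proof (intro conjI ballI impI)
  fix x y assume xy: "x \<in> verts H" "y \<in> verts H" "merge u w x = merge u w y"
  have "adj H u w" "adj H w u" using assms adj_sym unfolding adj_def by blast+
  moreover have "x = y \<or> (x = u \<and> y = w) \<or> (x = w \<and> y = u)"
    using xy(3) by (auto simp: merge_def split: if_splits)
  ultimately show "conn_in H (verts H \<inter> merge u w -` {merge u w x}) x y"
    using xy by (auto simp: merge_def conn_in_def intro: r_into_rtranclp)
qed (auto simp: contract_endpts_eq_image)

lemma minor_step_minor_map: "minor_step H G \<Longrightarrow> \<exists>\<pi>. minor_map H G \<pi>"
proof (induction rule: minor_step.induct)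
  case (del_vertex v H)
  have "minor_map H (H\<lparr>verts := verts H - {v}\<rparr>) id" by (rule minor_map_id) auto
  then show ?case by blast
next
  case (del_edge e H)
  have "minor_map H (H\<lparr>edges := edges H - {e}\<rparr>) id" by (rule minor_map_id) auto
  then show ?case by blast
qed (blast intro: minor_map_contract)

lemma graph_iso_minor_map: "graph_iso H G \<Longrightarrow> \<exists>\<pi>. minor_map H G \<pi>"
proof -
  assume "graph_iso H G"
  then obtain f g where f: "bij_betw f (verts H) (verts G)" and g: "bij_betw g (edges H) (edges G)"
    and ep: "\<forall>e\<in>edges H. endpts G (g e) = f ` endpts H e" unfolding graph_iso_def by blast
  have "minor_map H G f" unfolding minor_map_def
  proof (intro conjI ballI impI)
    fix e' assume "e' \<in> edges G"
    then obtain e where "e \<in> edges H" "e' = g e" using g by (auto simp: bij_betw_def)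
    then show "\<exists>e\<in>edges H. endpts G e' = f ` endpts H e" using ep by blast
  next
    fix x y assume "x \<in> verts H" "y \<in> verts H" "f x = f y"
    then have "x = y" using f by (auto simp: bij_betw_def inj_on_def)
    then show "conn_in H (verts H \<inter> f -` {f x}) x y" unfolding conn_in_def by simp
  qed
  then show ?thesis by blast
qed

lemma adj_lift:
  assumes "edges_wf H" "minor_map H G \<pi>" "adj G x y"
  shows "\<exists>x'\<in>verts H. \<exists>y'\<in>verts H. adj H x' y' \<and> \<pi> x' = x \<and> \<pi> y' = y"
proof -
  obtain f where "f \<in> edges G" "endpts G f = {x, y}" using assms(3) unfolding adj_def by blast
  then obtain e where e: "e \<in> edges H" "{x, y} = \<pi> ` endpts H e"
    using assms(2) unfolding minor_map_def by metis
  then obtain a b where ab: "endpts H e = {a, b}" "a \<in> verts H" "b \<in> verts H"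
    using assms(1) unfolding edges_wf_def by (metis card_2_iff insert_subset)
  have "adj H a b" "adj H b a" using e(1) ab(1) adj_sym unfolding adj_def by blast+
  moreover have "(\<pi> a = x \<and> \<pi> b = y) \<or> (\<pi> b = x \<and> \<pi> a = y)"
    using e(2) ab(1) by (auto simp: doubleton_eq_iff)
  ultimately show ?thesis using ab(2,3) by blast
qed

lemma conn_in_lift:
  assumes wf: "edges_wf H" and \<pi>: "minor_map H G \<pi>" and conn: "conn_in G B x y" and "x \<in> B"
    and x': "x' \<in> verts H" "\<pi> x' = x"
  shows "y' \<in> verts H \<Longrightarrow> \<pi> y' = y \<Longrightarrow> conn_in H (verts H \<inter> \<pi> -` B) x' y'"
  using conn[unfolded conn_in_def]
proof (induction arbitrary: y' rule: rtranclp_induct)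
  case base
  then have "conn_in H (verts H \<inter> \<pi> -` {\<pi> x'}) x' y'" using x' \<pi> unfolding minor_map_def by blast
  then show ?case by (rule conn_in_mono) (use x' \<open>x \<in> B\<close> in auto)
next
  case (step y z)
  obtain y1 z1 where yz1: "y1 \<in> verts H" "z1 \<in> verts H" "adj H y1 z1" "\<pi> y1 = y" "\<pi> z1 = z"
    using adj_lift[OF wf \<pi>] step.hyps(2) by blast
  have "conn_in H (verts H \<inter> \<pi> -` {\<pi> z1}) z1 y'"
    using yz1 step.prems \<pi> unfolding minor_map_def by (metis (no_types, lifting))
  then have "conn_in H (verts H \<inter> \<pi> -` B) z1 y'" by (rule conn_in_mono) (use step.hyps(2) yz1 in auto)
  moreover have "conn_in H (verts H \<inter> \<pi> -` B) y1 z1" using yz1 step.hyps(2) by (auto intro: conn_in_edge)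
  ultimately show ?case using step.IH[OF yz1(1,4)] by (blast intro: conn_in_trans)
qed

lemma star_model_vimage:
  assumes wf: "edges_wf H" and \<pi>: "minor_map H G \<pi>" and M: "star_model G m B L"
  shows "star_model H m (verts H \<inter> \<pi> -` B) (\<lambda>i. verts H \<inter> \<pi> -` L i)"
  unfolding star_model_def
proof (intro conjI ballI impI)
  fix a b assume "a \<in> verts H \<inter> \<pi> -` B" "b \<in> verts H \<inter> \<pi> -` B"
  then show "conn_in H (verts H \<inter> \<pi> -` B) a b" using conn_in_lift[OF wf \<pi>] star_modelD(2)[OF M] by blast
next
  fix i assume i: "i \<in> {1..m}"
  then obtain x y where "x \<in> L i" "y \<in> B" "adj G x y" using star_modelD(5)[OF M] by blast
  then show "\<exists>x\<in>verts H \<inter> \<pi> -` L i. \<exists>y\<in>verts H \<inter> \<pi> -` B. adj H x y"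
    using adj_lift[OF wf \<pi>] by fastforce
  show "verts H \<inter> \<pi> -` L i \<inter> (verts H \<inter> \<pi> -` B) = {}" using star_modelD(4)[OF M i] by blast
next
  fix i j assume "i \<in> {1..m}" "j \<in> {1..m}" "i \<noteq> j"
  then show "verts H \<inter> \<pi> -` L i \<inter> (verts H \<inter> \<pi> -` L j) = {}" using star_modelD(6)[OF M] by blast
qed auto

lemma has_star_model_minor_map:
  "edges_wf H \<Longrightarrow> minor_map H G \<pi> \<Longrightarrow> has_star_model G m \<Longrightarrow> has_star_model H m"
  unfolding has_star_model_def by (blast dest: star_model_vimage)

lemma has_star_model_minor_steps:
  "minor_step\<^sup>*\<^sup>* H G \<Longrightarrow> edges_wf H \<Longrightarrow> has_star_model G m \<Longrightarrow> has_star_model H m"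
proof (induction rule: converse_rtranclp_induct)
  case (step H H')
  then show ?case
    using edges_wf_minor_step minor_step_minor_map has_star_model_minor_map by metis
qed

lemma has_star_model_if_minor:
  assumes "is_minor (star m) H" "edges_wf H"
  shows "has_star_model H m"
proof -
  obtain G where G: "minor_step\<^sup>*\<^sup>* H G" "graph_iso G (star m)"
    using assms(1) unfolding is_minor_def by blast
  obtain \<pi> where "minor_map G (star m) \<pi>" using graph_iso_minor_map[OF G(2)] by blast
  moreover have "has_star_model (star m) m" unfolding has_star_model_def using star_model_star by blast
  ultimately have "has_star_model G m"
    using has_star_model_minor_map edges_wf_minor_steps[OF G(1) assms(2)] by blast
  then show ?thesis using has_star_model_minor_steps[OF G(1) assms(2)] by blast
qed

section \<open>Geodesics\<close>

definition geodesic :: "('a \<Rightarrow> 'a \<Rightarrow> bool) \<Rightarrow> 'a list \<Rightarrow> bool" where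
  "geodesic R vs \<longleftrightarrow> (\<forall>i j l. i < length vs \<longrightarrow> j < length vs \<longrightarrow> (R ^^ l) (vs ! i) (vs ! j) \<longrightarrow>
      j \<le> i + l \<and> i \<le> j + l)"

lemma geodesicD:
  "geodesic R vs \<Longrightarrow> i < length vs \<Longrightarrow> j < length vs \<Longrightarrow> (R ^^ l) (vs ! i) (vs ! j) \<Longrightarrow>
    j \<le> i + l \<and> i \<le> j + l"
  unfolding geodesic_def by blast

lemma relpowp_sym:
  assumes "\<And>x y. R x y \<Longrightarrow> R y x"
  shows "(R ^^ l) x y \<Longrightarrow> (R ^^ l) y x"
proof (induction l arbitrary: y)
  case (Suc l)
  from Suc.prems obtain z where "(R ^^ l) x z" "R z y" by (rule relpowp_Suc_E)
  then show ?case using Suc.IH assms by (blast intro: relpowp_Suc_I2)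
qed simp

lemma relpowp_rtrancl_path: "(R ^^ l) x y \<Longrightarrow> \<exists>xs. rtrancl_path R x xs y \<and> length xs = l"
proof (induction l arbitrary: x)
  case 0
  then show ?case by (auto intro: rtrancl_path.base)
next
  case (Suc l)
  from Suc.prems obtain z where "R x z" "(R ^^ l) z y" by (rule relpowp_Suc_E2)
  then show ?case using Suc.IH by (fastforce intro: rtrancl_path.step)
qed

lemma path_adj: "is_path H vs es \<Longrightarrow> Suc t < length vs \<Longrightarrow> adj H (vs ! t) (vs ! Suc t)"
  unfolding is_path_def adj_def by (metis Suc_eq_plus1 add_less_cancel_right nth_mem subsetD)

lemma path_relpowp: "is_path H vs es \<Longrightarrow> i \<le> j \<Longrightarrow> j < length vs \<Longrightarrow> (adj H ^^ (j - i)) (vs ! i) (vs ! j)"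
  unfolding relpowp_fun_conv by (intro exI[of _ "\<lambda>t. vs ! (i + t)"]) (auto intro: path_adj)

lemma rtrancl_path_is_path:
  "rtrancl_path (adj H) x xs y \<Longrightarrow> distinct (x # xs) \<Longrightarrow> edges_wf H \<Longrightarrow> x \<in> verts H \<Longrightarrow>
    \<exists>es. is_path H (x # xs) es"
proof (induction rule: rtrancl_path.induct)
  case (base x)
  then show ?case unfolding is_path_def by (intro exI[of _ "[]"]) simp
next
  case (step x z ys y)
  obtain es where es: "is_path H (z # ys) es" using step adj_in_verts by auto
  obtain e where e: "e \<in> edges H" "endpts H e = {x, z}" using step(1) unfolding adj_def by blast
  have "is_path H (x # z # ys) (e # es)"
    using es e step.prems unfolding is_path_def by (auto simp: nth_Cons split: nat.split)
  then show ?case by blast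
qed

lemma is_usp_geodesic:
  assumes usp: "is_usp H vs es" and wf: "edges_wf H"
  shows "geodesic (adj H) vs"
proof -
  have P: "is_path H vs es" using usp unfolding is_usp_def by simp
  then have ne: "vs \<noteq> []" and vs0: "vs ! 0 \<in> verts H" unfolding is_path_def by auto
  define n where "n = length vs - 1"
  have last_vs: "last vs = vs ! n" using ne unfolding n_def by (simp add: last_conv_nth)
  have shortcut: "j \<le> i + l" if ij: "i < length vs" "j < length vs" "(adj H ^^ l) (vs ! i) (vs ! j)"
    for i j l
  proof (rule ccontr)
    assume "\<not> j \<le> i + l"
    have "(adj H ^^ i) (vs ! 0) (vs ! i)" "(adj H ^^ (n - j)) (vs ! j) (vs ! n)"
      using path_relpowp[OF P, of 0 i] path_relpowp[OF P, of j n] ij unfolding n_def by auto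
    then have "(adj H ^^ (i + l + (n - j))) (vs ! 0) (vs ! n)"
      using ij(3) by (blast intro: relpowp_trans)
    then obtain xs where xs: "rtrancl_path (adj H) (vs ! 0) xs (vs ! n)" "length xs < n"
      using relpowp_rtrancl_path \<open>\<not> j \<le> i + l\<close> ij(2) unfolding n_def by fastforce
    obtain ys where ys: "rtrancl_path (adj H) (vs ! 0) ys (vs ! n)" "distinct (vs ! 0 # ys)"
      "set ys \<subseteq> set xs"
      using rtrancl_path_distinct[OF xs(1)] by blast
    have "length ys = card (set ys)" using ys(2) by (simp add: distinct_card)
    also have "\<dots> \<le> length xs" using ys(3) card_mono[OF List.finite_set ys(3)] card_length order_trans by blast
    finally have "length ys < n" using xs(2) by simp
    obtain es' where "is_path H (vs ! 0 # ys) es'" using rtrancl_path_is_path[OF ys(1,2) wf vs0] by blast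
    moreover have "last (vs ! 0 # ys) = last vs"
      using ys(1) last_vs by (cases ys) (auto dest: rtrancl_path_last elim: rtrancl_path.cases)
    ultimately have "is_uv_path H (hd vs) (last vs) (vs ! 0 # ys) es'"
      unfolding is_uv_path_def using ne by (simp add: hd_conv_nth)
    then have "length vs \<le> Suc (length ys)" using usp unfolding is_usp_def by fastforce
    then show False using \<open>length ys < n\<close> unfolding n_def by simp
  qed
  show ?thesis
    unfolding geodesic_def using shortcut relpowp_sym[of "adj H", OF adj_sym] by blast
qed

definition positions :: "'a list \<Rightarrow> 'a set \<Rightarrow> nat set" where
  "positions vs X = {t. t < length vs \<and> vs ! t \<in> X}"

lemma card_gap_jump_le:
  assumes "c \<in> X" "X' \<subseteq> X" "card ({min c b..max c b} - X' - {c}) \<le> k"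
    and "c \<le> a + m" "a \<le> c + m" "1 \<le> m"
  shows "card ({min a b..max a b} - X - {a}) + 1 \<le> k + (m::nat)"
proof -
  have "{min a b..max a b} - X - {a} \<subseteq> {min a c<..<max a c} \<union> ({min c b..max c b} - X' - {c})"
    using assms(1,2) by (auto simp: min_def max_def)
  then have "card ({min a b..max a b} - X - {a})
      \<le> card {min a c<..<max a c} + card ({min c b..max c b} - X' - {c})"
    by (meson card_Un_le card_mono finite_Diff finite_UnI finite_atLeastAtMost
        finite_greaterThanLessThan order_trans)
  moreover have "card {min a c<..<max a c} + 1 \<le> m"
    using assms(4-6) by (simp add: min_def max_def) linarith
  ultimately show ?thesis using assms(3) by linarith
qed

text \<open>A walk that left the geodesic vs at position a has taken m steps since; a jump back to
  position c costs at least |a - c| steps, which pays for the skipped positions strictly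
  between a and c.\<close>

lemma geodesic_walk_gaps:
  assumes "rtrancl_path R z ys y" "y = vs ! b" "b < length vs" "distinct (z # ys)" "distinct vs"
    "a < length vs" "(R ^^ m) (vs ! a) z" "1 \<le> m" "geodesic R vs"
  shows "card ({min a b..max a b} - positions vs (set (z # ys)) - {a}) + 1
    \<le> card (set (z # ys) - set vs) + m"
  using assms
proof (induction arbitrary: a m rule: rtrancl_path.induct)
  case (base y)
  have "b \<in> positions vs (set [y])" using base.prems unfolding positions_def by simp
  moreover have "b \<le> a + m" "a \<le> b + m" using geodesicD[OF base.prems(8,5,2)] base.prems(1,6) by auto
  ultimately show ?case using card_gap_jump_le[of b _ "positions vs (set [y])" b 0] base.prems(7) by simp
next
  case (step x z ys y)
  let ?X = "set (x # z # ys)" and ?X' = "set (z # ys)"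
  have "finite (?X' - set vs)" "x \<notin> ?X'" "distinct (z # ys)" using step.prems(3) by auto
  show ?case
  proof (cases "x \<in> set vs")
    case False
    have "(R ^^ Suc m) (vs ! a) z" using step.prems(6) step.hyps(1) by (rule relpowp_Suc_I)
    from step.IH[OF step.prems(1,2) \<open>distinct (z # ys)\<close> step.prems(4,5) this _ step.prems(8)]
    have "card ({min a b..max a b} - positions vs ?X' - {a}) + 1 \<le> card (?X' - set vs) + Suc m" by simp
    moreover have "positions vs ?X = positions vs ?X'"
      using False unfolding positions_def by (auto simp: nth_mem)
    moreover have "card (?X - set vs) = Suc (card (?X' - set vs))"
      using False \<open>finite (?X' - set vs)\<close> \<open>x \<notin> ?X'\<close> by (simp add: insert_Diff_if)
    ultimately show ?thesis by simp
  next
    case True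
    then obtain c where c: "c < length vs" "vs ! c = x" by (metis in_set_conv_nth)
    have "(R ^^ 1) (vs ! c) z" unfolding relpowp_1 using step.hyps(1) c(2) by simp
    from step.IH[OF step.prems(1,2) \<open>distinct (z # ys)\<close> step.prems(4) c(1) this _ step.prems(8)]
    have "card ({min c b..max c b} - positions vs ?X' - {c}) \<le> card (?X' - set vs)" by simp
    moreover have "c \<in> positions vs ?X" "positions vs ?X' \<subseteq> positions vs ?X"
      unfolding positions_def using c by auto
    moreover have "c \<le> a + m" "a \<le> c + m" using geodesicD[OF step.prems(8,5) c(1)] step.prems(6) c(2) by auto
    moreover have "?X - set vs = ?X' - set vs" using True by auto
    ultimately show ?thesis using card_gap_jump_le step.prems(7) by metis
  qed
qed

lemma geodesic_gaps:
  assumes geo: "geodesic R vs" and "distinct vs" "finite S" "a < length vs" "b < length vs"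
    "vs ! a \<in> S" and walk: "(\<lambda>x y. x \<in> S \<and> y \<in> S \<and> R x y)\<^sup>*\<^sup>* (vs ! a) (vs ! b)"
  shows "card ({min a b..max a b} - positions vs S) \<le> card (S - set vs)"
proof -
  let ?RS = "\<lambda>x y. x \<in> S \<and> y \<in> S \<and> R x y"
  obtain xs0 where "rtrancl_path ?RS (vs ! a) xs0 (vs ! b)"
    using walk unfolding rtranclp_eq_rtrancl_path by blast
  then obtain xs where xs: "rtrancl_path ?RS (vs ! a) xs (vs ! b)" "distinct (vs ! a # xs)"
    by (rule rtrancl_path_distinct)
  have "a \<in> positions vs S" using assms(4,6) unfolding positions_def by simp
  show ?thesis
  proof (cases xs)
    case Nil
    then have "vs ! a = vs ! b" using xs(1) by (auto elim: rtrancl_path.cases)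
    then have "a = b" using assms(2,4,5) by (simp add: nth_eq_iff_index_eq)
    then show ?thesis using \<open>a \<in> positions vs S\<close> by simp
  next
    case (Cons z ys)
    then have "?RS (vs ! a) z" "rtrancl_path ?RS z ys (vs ! b)" using xs(1) by (auto elim: rtrancl_path.cases)
    then have "(R ^^ 1) (vs ! a) z" "rtrancl_path R z ys (vs ! b)" and zys: "set (z # ys) \<subseteq> S"
      using rtrancl_path_Range[of ?RS z ys] by (auto intro: rtrancl_path_mono)
    moreover have "distinct (z # ys)" using xs(2) Cons by simp
    ultimately have "card ({min a b..max a b} - positions vs (set (z # ys)) - {a}) \<le> card (set (z # ys) - set vs)"
      using geodesic_walk_gaps[OF _ refl assms(5) _ assms(2,4) _ _ geo] by fastforce
    moreover have "{min a b..max a b} - positions vs S \<subseteq> {min a b..max a b} - positions vs (set (z # ys)) - {a}"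
      using zys \<open>a \<in> positions vs S\<close> unfolding positions_def by auto
    moreover have "card (set (z # ys) - set vs) \<le> card (S - set vs)"
      using zys assms(3) by (intro card_mono) auto
    ultimately show ?thesis by (meson card_mono finite_Diff finite_atLeastAtMost order_trans)
  qed
qed

section \<open>The lower bound\<close>

lemma is_usp_single: "x \<in> verts H \<Longrightarrow> is_usp H [x] []"
  unfolding is_usp_def is_uv_path_def is_path_def by (auto simp: length_Suc_conv)

lemma finite_usp_lengths:
  assumes "finite (verts H)"
  shows "finite {length vs | vs es. is_usp H vs es}"
proof (rule finite_subset)
  show "{length vs | vs es. is_usp H vs es} \<subseteq> {..card (verts H)}"
  proof
    fix n assume "n \<in> {length vs | vs es. is_usp H vs es}"
    then obtain vs es where "n = length vs" "distinct vs" "set vs \<subseteq> verts H"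
      unfolding is_usp_def is_path_def by blast
    then show "n \<in> {..card (verts H)}" using assms by (metis atMost_iff card_mono distinct_card)
  qed
qed simp

lemma usp_ge: "finite (verts H) \<Longrightarrow> is_usp H vs es \<Longrightarrow> length vs \<le> usp H"
  unfolding usp_def by (rule Max_ge[OF finite_usp_lengths]) auto

lemma usp_le:
  assumes "finite (verts H)" "verts H \<noteq> {}" "\<And>vs es. is_usp H vs es \<Longrightarrow> length vs \<le> N"
  shows "usp H \<le> N"
proof -
  have "{length vs | vs es. is_usp H vs es} \<noteq> {}" using assms(2) is_usp_single by blast
  then show ?thesis unfolding usp_def using assms(3)
    by (subst Max_le_iff[OF finite_usp_lengths[OF assms(1)]]) blast+
qed

lemma card_positions: "distinct vs \<Longrightarrow> X \<subseteq> set vs \<Longrightarrow> card (positions vs X) = card X"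
  unfolding positions_def by (rule bij_betw_same_card[of "nth vs"])
    (fastforce simp: bij_betw_def inj_on_def nth_eq_iff_index_eq in_set_conv_nth)

lemma card_leaves_off_path:
  assumes M: "star_model H m B L" and fin: "finite (verts H)"
  shows "card {i \<in> {1..m}. \<not> L i \<subseteq> set vs} + card (B - set vs) \<le> card (verts H - set vs)"
proof -
  let ?Out = "{i \<in> {1..m}. \<not> L i \<subseteq> set vs}"
  have "\<forall>i\<in>?Out. \<exists>x. x \<in> L i - set vs" by blast
  then obtain r where r: "\<forall>i\<in>?Out. r i \<in> L i - set vs" by (rule bchoice[THEN exE])
  have "inj_on r ?Out"
  proof (rule inj_onI)
    fix i j assume "i \<in> ?Out" "j \<in> ?Out" "r i = r j"
    then have "r i \<in> L i \<inter> L j" using r by auto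
    then show "i = j" using star_modelD(6)[OF M] \<open>i \<in> ?Out\<close> \<open>j \<in> ?Out\<close> by blast
  qed
  then have "card ?Out = card (r ` ?Out)" by (simp add: card_image)
  have r_out: "r ` ?Out \<subseteq> verts H - set vs - B" using r star_modelD(3,4)[OF M] by blast
  have B: "B - set vs \<subseteq> verts H - set vs" using star_modelD(1)[OF M] by blast
  have "finite B" using star_modelD(1)[OF M] fin by (rule finite_subset)
  have "card (r ` ?Out) + card (B - set vs) = card (r ` ?Out \<union> (B - set vs))"
    using r_out \<open>finite B\<close> fin by (intro card_Un_disjoint[symmetric]) (auto intro: finite_subset)
  also have "\<dots> \<le> card (verts H - set vs)"
    using r_out B fin by (intro card_mono) auto
  finally show ?thesis using \<open>card ?Out = card (r ` ?Out)\<close> by simp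
qed

lemma usp_gap_through_centre:
  assumes usp: "is_usp H vs es" and wf: "edges_wf H" and fin: "finite B"
    and B: "\<And>a b. a \<in> B \<Longrightarrow> b \<in> B \<Longrightarrow> conn_in H B a b" and lohi: "lo < length vs" "hi < length vs"
    and y1: "y1 \<in> B" "adj H (vs ! lo) y1" and y2: "y2 \<in> B" "adj H (vs ! hi) y2"
  shows "card ({min lo hi..max lo hi} - positions vs (insert (vs ! lo) (insert (vs ! hi) B)))
    \<le> card (B - set vs)"
proof -
  let ?S = "insert (vs ! lo) (insert (vs ! hi) B)"
  have "conn_in H ?S (vs ! lo) y1" "conn_in H ?S y2 (vs ! hi)"
    using y1 y2 adj_sym by (auto intro: conn_in_edge)
  moreover have "conn_in H ?S y1 y2" using B y1(1) y2(1) by (blast intro: conn_in_mono)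
  ultimately have "conn_in H ?S (vs ! lo) (vs ! hi)" by (blast intro: conn_in_trans)
  then have walk: "(\<lambda>x y. x \<in> ?S \<and> y \<in> ?S \<and> adj H x y)\<^sup>*\<^sup>* (vs ! lo) (vs ! hi)"
    unfolding conn_in_def .
  have "distinct vs" using usp unfolding is_usp_def is_path_def by simp
  have "card ({min lo hi..max lo hi} - positions vs ?S) \<le> card (?S - set vs)"
    by (rule geodesic_gaps[OF is_usp_geodesic[OF usp wf] \<open>distinct vs\<close> _ lohi _ walk]) (use fin in simp_all)
  moreover have "?S - set vs = B - set vs" using lohi by auto
  ultimately show ?thesis by simp
qed

lemma card_positions_adjacent_to_centre:
  assumes usp: "is_usp H vs es" and wf: "edges_wf H" and fin: "finite B"
    and B: "\<And>a b. a \<in> B \<Longrightarrow> b \<in> B \<Longrightarrow> conn_in H B a b" and J: "J \<subseteq> {..<length vs}"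
    and adj_B: "\<And>t. t \<in> J \<Longrightarrow> vs ! t \<notin> B \<and> (\<exists>y\<in>B. adj H (vs ! t) y)"
  shows "card J \<le> card (B - set vs) + 2"
proof (cases "J = {}")
  case False
  have "finite J" using J finite_subset by blast
  define lo hi where "lo = Min J" and "hi = Max J"
  have "lo \<in> J" "hi \<in> J" "lo \<le> hi" using \<open>finite J\<close> False unfolding lo_def hi_def by auto
  then obtain y1 y2 where y: "y1 \<in> B" "adj H (vs ! lo) y1" "y2 \<in> B" "adj H (vs ! hi) y2"
    and lohi: "lo < length vs" "hi < length vs" using adj_B J by blast
  have "distinct vs" using usp unfolding is_usp_def is_path_def by simp
  let ?S = "insert (vs ! lo) (insert (vs ! hi) B)"
  have "J - {lo, hi} \<subseteq> {lo..hi} - positions vs ?S"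
  proof
    fix s assume s: "s \<in> J - {lo, hi}"
    then have "vs ! s \<noteq> vs ! lo" "vs ! s \<noteq> vs ! hi"
      using J lohi \<open>distinct vs\<close> by (auto simp: nth_eq_iff_index_eq)
    moreover have "lo \<le> s" "s \<le> hi" using s \<open>finite J\<close> unfolding lo_def hi_def by auto
    ultimately show "s \<in> {lo..hi} - positions vs ?S" using s adj_B unfolding positions_def by auto
  qed
  then have "card (J - {lo, hi}) \<le> card ({lo..hi} - positions vs ?S)" by (intro card_mono) simp_all
  also have "\<dots> \<le> card (B - set vs)"
    using usp_gap_through_centre[OF usp wf fin B lohi y] \<open>lo \<le> hi\<close> by simp
  finally have "card (J - {lo, hi}) \<le> card (B - set vs)" .
  moreover have "card J \<le> card (J - {lo, hi}) + 2"
    using diff_card_le_card_Diff[of "{lo, hi}" J] card_insert_le_m1[of 2 "{hi}" lo] by simp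
  ultimately show ?thesis by simp
qed simp

lemma card_leaves_on_path:
  assumes M: "star_model H m B L" and fin: "finite (verts H)" and usp: "is_usp H vs es"
    and wf: "edges_wf H"
  shows "card {i \<in> {1..m}. L i \<subseteq> set vs} \<le> card (B - set vs) + 2"
proof -
  let ?In = "{i \<in> {1..m}. L i \<subseteq> set vs}"
  have "\<forall>i\<in>?In. \<exists>x. x \<in> L i \<and> (\<exists>y\<in>B. adj H x y)" using star_modelD(5)[OF M] by blast
  then obtain v where v: "\<forall>i\<in>?In. v i \<in> L i \<and> (\<exists>y\<in>B. adj H (v i) y)" by (rule bchoice[THEN exE])
  have "inj_on v ?In"
  proof (rule inj_onI)
    fix i j assume "i \<in> ?In" "j \<in> ?In" "v i = v j"
    then have "v i \<in> L i \<inter> L j" using v by auto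
    then show "i = j" using star_modelD(6)[OF M] \<open>i \<in> ?In\<close> \<open>j \<in> ?In\<close> by blast
  qed
  have "distinct vs" using usp unfolding is_usp_def is_path_def by simp
  moreover have "v ` ?In \<subseteq> set vs" using v by auto
  ultimately have "card (positions vs (v ` ?In)) = card (v ` ?In)" by (rule card_positions)
  then have "card (positions vs (v ` ?In)) = card ?In" using card_image[OF \<open>inj_on v ?In\<close>] by simp
  moreover have "vs ! t \<notin> B \<and> (\<exists>y\<in>B. adj H (vs ! t) y)" if "t \<in> positions vs (v ` ?In)" for t
    using that v star_modelD(4)[OF M] unfolding positions_def by fastforce
  moreover have "finite B" using star_modelD(1)[OF M] fin by (rule finite_subset)
  ultimately show ?thesis
    using card_positions_adjacent_to_centre[OF usp wf _ star_modelD(2)[OF M], of "positions vs (v ` ?In)"]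
    unfolding positions_def by fastforce
qed

lemma length_usp_add_leaves_le:
  assumes wf: "wf_graph H" and M: "star_model H m B L" and usp: "is_usp H vs es"
  shows "length vs + m \<le> card (verts H) + 2"
proof -
  have fin: "finite (verts H)" using wf unfolding wf_graph_def by simp
  have "distinct vs" "set vs \<subseteq> verts H" using usp unfolding is_usp_def is_path_def by auto
  then have "card (verts H - set vs) = card (verts H) - length vs" "length vs \<le> card (verts H)"
    using fin by (auto simp: card_Diff_subset distinct_card dest: card_mono[of _ "set vs"])
  moreover have "card {i \<in> {1..m}. L i \<subseteq> set vs} + card {i \<in> {1..m}. \<not> L i \<subseteq> set vs} = m"
  proof -
    have "card {i \<in> {1..m}. L i \<subseteq> set vs} + card {i \<in> {1..m}. \<not> L i \<subseteq> set vs}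
        = card ({i \<in> {1..m}. L i \<subseteq> set vs} \<union> {i \<in> {1..m}. \<not> L i \<subseteq> set vs})"
      by (rule card_Un_disjoint[symmetric]) auto
    also have "{i \<in> {1..m}. L i \<subseteq> set vs} \<union> {i \<in> {1..m}. \<not> L i \<subseteq> set vs} = {1..m}" by blast
    finally show ?thesis by simp
  qed
  ultimately show ?thesis
    using card_leaves_off_path[OF M fin, of vs] card_leaves_on_path[OF M fin usp edges_wf_if_wf_graph[OF wf]]
    by linarith
qed

lemma sp_ge_if_has_star_model:
  assumes wf: "wf_graph H" and "has_star_model H m"
  shows "m - 2 \<le> sp H"
proof -
  obtain B L where M: "star_model H m B L" using assms(2) unfolding has_star_model_def by blast
  have fin: "finite (verts H)" "verts H \<noteq> {}" using wf unfolding wf_graph_def by auto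
  then obtain x where "is_usp H [x] []" using is_usp_single by blast
  then have "m \<le> card (verts H) + 1" using length_usp_add_leaves_le[OF wf M] by fastforce
  moreover have "length vs \<le> card (verts H) + 2 - m" if "is_usp H vs es" for vs es
    using length_usp_add_leaves_le[OF wf M that] by linarith
  then have "usp H \<le> card (verts H) + 2 - m" by (rule usp_le[OF fin])
  ultimately show ?thesis unfolding sp_def by linarith
qed

section \<open>Unique shortest paths forced by degrees\<close>

lemma is_pathD:
  assumes "is_path H vs es"
  shows "vs \<noteq> []" "distinct vs" "length vs = Suc (length es)"
    and "i < length es \<Longrightarrow> es ! i \<in> edges H \<and> endpts H (es ! i) = {vs ! i, vs ! Suc i}"
  using assms unfolding is_path_def by auto

text \<open>An edge at vs ! i that lies on vs before position i leads back to a vertex already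
  visited, so a path starting at hd vs is forced to follow vs edge by edge.\<close>

lemma forced_path_prefix:
  assumes P: "is_path H vs es" and P': "is_uv_path H (hd vs) (last vs) vs' es'"
    and forced: "\<And>i f. Suc i < length es \<Longrightarrow> f \<in> edges H \<Longrightarrow> vs ! i \<in> endpts H f \<Longrightarrow>
      f \<in> set (take (Suc i) es)"
  shows "i < length es \<Longrightarrow> i < length vs' \<and> (\<forall>j\<le>i. vs' ! j = vs ! j) \<and> (\<forall>j<i. es' ! j = es ! j)"
proof (induction i)
  case 0
  then show ?case using P P' unfolding is_uv_path_def is_path_def by (auto simp: hd_conv_nth)
next
  case (Suc i)
  then have IH: "i < length vs'" "\<forall>j\<le>i. vs' ! j = vs ! j" "\<forall>j<i. es' ! j = es ! j" by simp_all
  have P'': "is_path H vs' es'" "last vs' = last vs" using P' unfolding is_uv_path_def by simp_all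
  have "vs ! i \<noteq> last vs" using is_pathD(1-3)[OF P] Suc.prems by (simp add: last_conv_nth nth_eq_iff_index_eq)
  then have "vs' ! i \<noteq> last vs'" using IH P'' by simp
  then have i': "i < length es'" using IH(1) is_pathD(1,3)[OF P''(1)] by (auto simp: last_conv_nth less_Suc_eq)
  note e' = is_pathD(4)[OF P''(1) i']
  then have "es' ! i \<in> set (take (Suc i) es)" using forced[OF Suc.prems] IH(2) by simp
  then obtain j where "j < length (take (Suc i) es)" "take (Suc i) es ! j = es' ! i"
    by (auto simp: in_set_conv_nth)
  then have j: "j \<le> i" "es' ! i = es ! j" by auto
  have "j = i"
  proof (rule ccontr)
    assume "j \<noteq> i"
    then have "j < i" using j(1) by simp
    then have "endpts H (es ! j) = {vs' ! j, vs' ! Suc j}" using is_pathD(4)[OF P, of j] IH(2) Suc.prems by simp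
    then have "vs' ! Suc i \<in> {vs' ! j, vs' ! Suc j}" using e' j(2) by auto
    then show False using is_pathD(2,3)[OF P''(1)] i' \<open>j < i\<close> by (auto simp: nth_eq_iff_index_eq)
  qed
  then have "vs' ! Suc i = vs ! Suc i"
    using e' j(2) is_pathD(4)[OF P] Suc.prems IH(2) by (auto simp: doubleton_eq_iff)
  then show ?case using IH i' j(2) \<open>j = i\<close> is_pathD(3)[OF P''(1)] by (auto simp: le_Suc_eq less_Suc_eq)
qed

lemma is_usp_if_forced:
  assumes P: "is_path H vs es" and "es \<noteq> []"
    and forced: "\<And>i f. Suc i < length es \<Longrightarrow> f \<in> edges H \<Longrightarrow> vs ! i \<in> endpts H f \<Longrightarrow>
      f \<in> set (take (Suc i) es)"
    and pendant: "\<And>f. f \<in> edges H \<Longrightarrow> last vs \<in> endpts H f \<Longrightarrow> f = last es"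
  shows "is_usp H vs es"
proof -
  define n where "n = length es - 1"
  have n: "n < length es" "length vs = Suc (Suc n)" "last es = es ! n"
    using \<open>es \<noteq> []\<close> is_pathD(3)[OF P] unfolding n_def by (auto simp: last_conv_nth)
  have last_vs: "last vs = vs ! Suc n" using n(2) is_pathD(1)[OF P] by (simp add: last_conv_nth)
  have "length vs \<le> length vs' \<and> (length vs' = length vs \<longrightarrow> vs' = vs \<and> es' = es)"
    if P': "is_uv_path H (hd vs) (last vs) vs' es'" for vs' es'
  proof -
    have prefix: "n < length vs'" "\<forall>j\<le>n. vs' ! j = vs ! j" "\<forall>j<n. es' ! j = es ! j"
      using forced_path_prefix[OF P P' forced n(1)] by simp_all
    have P'': "is_path H vs' es'" "last vs' = last vs" using P' unfolding is_uv_path_def by simp_all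
    have "vs ! n \<noteq> vs ! Suc n" using is_pathD(2)[OF P] n(2) by (simp add: nth_eq_iff_index_eq)
    then have "vs' ! n \<noteq> last vs'" using prefix P''(2) last_vs by simp
    then have "n \<noteq> length vs' - 1" using prefix(2) is_pathD(1)[OF P''(1)] by (auto simp: last_conv_nth)
    then have "length vs \<le> length vs'" using prefix(1) n(2) by linarith
    moreover have "vs' = vs \<and> es' = es" if "length vs' = length vs"
    proof
      have len': "length vs' = Suc (Suc n)" "length es' = Suc n"
        using that n(2) is_pathD(3)[OF P''(1)] by auto
      then have "last vs' = vs' ! Suc n" by (cases vs' rule: rev_cases) (auto simp: nth_append)
      then show "vs' = vs"
        using prefix len' n(2) P''(2) last_vs by (auto intro!: nth_equalityI simp: less_Suc_eq_le le_Suc_eq)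
      have "es' ! n \<in> edges H" "last vs \<in> endpts H (es' ! n)"
        using is_pathD(4)[OF P''(1), of n] len' P''(2) \<open>last vs' = vs' ! Suc n\<close> by auto
      then have "es' ! n = es ! n" using pendant n(3) by simp
      then show "es' = es" using prefix len' n is_pathD(3)[OF P] by (auto intro!: nth_equalityI simp: less_Suc_eq)
    qed
    ultimately show ?thesis by blast
  qed
  then show ?thesis unfolding is_usp_def using P by blast
qed

lemma sp_star_le:
  assumes "2 \<le> n"
  shows "sp (star n) \<le> n - 2"
proof -
  have "is_path (star n) [1, 0, 2] [1, 2]"
    unfolding is_path_def star_def using assms by (auto simp: less_Suc_eq numeral_eq_Suc insert_commute)
  then have "is_usp (star n) [1, 0, 2] [1, 2]" by (rule is_usp_if_forced) (auto simp: star_def)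
  then have "3 \<le> usp (star n)" using usp_ge[of "star n"] by (fastforce simp: star_def)
  then show ?thesis unfolding sp_def star_def by simp
qed

text \<open>The star on {0..n} with centre c, except that edge e joins d to the leaf q, where
  {c, d} = {0, e}. Deleting edge e, and also vertex d in the case of a contraction, recovers
  the one-step minors of star n, while d, q, c, x is a unique shortest path on four vertices.\<close>

definition subdivided_star :: "nat \<Rightarrow> nat \<Rightarrow> nat \<Rightarrow> nat \<Rightarrow> nat \<Rightarrow> mgraph" where
  "subdivided_star n e c d q =
     \<lparr>verts = {0..n}, edges = {1..n}, endpts = (\<lambda>f. if f = e then {d, q} else {c, f})\<rparr>"

lemma wf_subdivided_star:
  assumes "e \<in> {1..n}" "q \<in> {1..n}" "q \<noteq> e" "{c, d} = {0, e}"
  shows "wf_graph (subdivided_star n e c d q)"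
  using assms unfolding wf_graph_def subdivided_star_def by (auto simp: doubleton_eq_iff)

lemma sp_subdivided_star_le:
  assumes "e \<in> {1..n}" "q \<in> {1..n}" "q \<noteq> e" "{c, d} = {0, e}" "3 \<le> n"
  shows "sp (subdivided_star n e c d q) \<le> n - 3"
proof -
  let ?H = "subdivided_star n e c d q"
  obtain x where x: "x \<in> {1..n}" "x \<noteq> e" "x \<noteq> q"
    using assms(5) by (intro that[of "if 1 \<notin> {e, q} then 1 else if 2 \<notin> {e, q} then 2 else 3"]) auto
  have cd: "(c = 0 \<and> d = e) \<or> (c = e \<and> d = 0)" using assms(4) by (auto simp: doubleton_eq_iff)
  have P: "is_path ?H [d, q, c, x] [e, q, x]"
    using cd unfolding is_path_def subdivided_star_def
    by (elim disjE) (use assms x in \<open>auto simp: less_Suc_eq numeral_eq_Suc insert_commute\<close>)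
  have at_d: "f = e" if "d \<in> endpts ?H f" "f \<in> edges ?H" for f
    using that assms(1,2,3) cd by (auto simp: subdivided_star_def split: if_splits)
  have at_q: "f = e \<or> f = q" if "q \<in> endpts ?H f" for f
    using that assms(1,2,3) cd by (auto simp: subdivided_star_def split: if_splits)
  have at_x: "f = x" if "x \<in> endpts ?H f" for f
    using that x cd by (auto simp: subdivided_star_def split: if_splits)
  have "is_usp ?H [d, q, c, x] [e, q, x]"
    by (intro is_usp_if_forced[OF P]) (auto simp: less_Suc_eq numeral_eq_Suc dest: at_d at_q at_x)
  then have "4 \<le> usp ?H" using usp_ge[of ?H] by (fastforce simp: subdivided_star_def)
  then show ?thesis unfolding sp_def subdivided_star_def by simp
qed

section \<open>Proper minors of the star\<close>

definition same_graph :: "mgraph \<Rightarrow> mgraph \<Rightarrow> bool" where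
  "same_graph A B \<longleftrightarrow> verts A = verts B \<and> edges A = edges B \<and> (\<forall>e\<in>edges A. endpts A e = endpts B e)"

lemma minor_step_same_graph:
  assumes "minor_step A A'" "same_graph A B"
  shows "\<exists>B'. minor_step B B' \<and> same_graph A' B'"
  using assms
proof (induction rule: minor_step.induct)
  case (del_vertex v H)
  then show ?case
    by (intro exI[of _ "B\<lparr>verts := verts B - {v}\<rparr>"]) (auto simp: same_graph_def intro!: minor_step.del_vertex)
next
  case (del_edge e H)
  then show ?case
    by (intro exI[of _ "B\<lparr>edges := edges B - {e}\<rparr>"]) (auto simp: same_graph_def intro!: minor_step.del_edge)
next
  case (contract e H u w)
  then show ?case
    by (intro exI[of _ "\<lparr>verts = verts B - {w}, edges = edges B - {e},
        endpts = (\<lambda>f. if w \<in> endpts B f then insert u (endpts B f - {w}) else endpts B f)\<rparr>"])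
      (auto simp: same_graph_def intro!: minor_step.contract)
qed

lemma minor_steps_same_graph:
  assumes "minor_step\<^sup>*\<^sup>* A A'" "same_graph A B"
  shows "\<exists>B'. minor_step\<^sup>*\<^sup>* B B' \<and> same_graph A' B'"
  using assms
proof (induction rule: rtranclp_induct)
  case (step A' A'')
  then obtain B' where "minor_step\<^sup>*\<^sup>* B B'" "same_graph A' B'" by blast
  then show ?case using minor_step_same_graph[OF step.hyps(2)] by (meson rtranclp.rtrancl_into_rtrancl)
qed (auto simp: same_graph_def)

lemma graph_iso_same_graph: "same_graph A B \<Longrightarrow> graph_iso A G \<Longrightarrow> graph_iso B G"
  unfolding same_graph_def graph_iso_def by auto

lemma is_minor_same_graph:
  assumes "minor_step\<^sup>*\<^sup>* H A" "same_graph G1 A" "minor_step\<^sup>*\<^sup>* G1 G'" "graph_iso G' G"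
  shows "is_minor G H"
proof -
  obtain B where "minor_step\<^sup>*\<^sup>* A B" "same_graph G' B" using minor_steps_same_graph[OF assms(3,2)] by blast
  then show ?thesis
    using graph_iso_same_graph assms(1,4) unfolding is_minor_def by (meson rtranclp_trans)
qed

lemma graph_iso_refl: "graph_iso G G"
  unfolding graph_iso_def by (intro exI[of _ id]) (auto simp: bij_betw_def)

lemma graph_iso_sym:
  assumes "graph_iso G H" "edges_wf G"
  shows "graph_iso H G"
proof -
  obtain f g where f: "bij_betw f (verts G) (verts H)" and g: "bij_betw g (edges G) (edges H)"
    and ep: "\<forall>e\<in>edges G. endpts H (g e) = f ` endpts G e" using assms(1) unfolding graph_iso_def by blast
  have "endpts G (inv_into (edges G) g e') = inv_into (verts G) f ` endpts H e'" if "e' \<in> edges H" for e'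
  proof -
    define e where "e = inv_into (edges G) g e'"
    have e: "e \<in> edges G" "g e = e'" using g that unfolding e_def
      by (auto simp: bij_betw_def inv_into_into f_inv_into_f)
    then have "endpts G e \<subseteq> verts G" using assms(2) unfolding edges_wf_def by blast
    then have "inv_into (verts G) f ` f ` endpts G e = endpts G e"
      using f by (simp add: bij_betw_def inv_into_image_cancel)
    then show ?thesis using e ep unfolding e_def[symmetric] by metis
  qed
  then show ?thesis unfolding graph_iso_def using bij_betw_inv_into[OF f] bij_betw_inv_into[OF g] by blast
qed

lemma sp_floor_le: "wf_graph H \<Longrightarrow> is_minor G H \<Longrightarrow> sp_floor G \<le> sp H"
  unfolding sp_floor_def by (rule Least_le) blast

lemma sp_ge_if_star_minor: "wf_graph H \<Longrightarrow> is_minor (star n) H \<Longrightarrow> n - 2 \<le> sp H"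
  by (intro sp_ge_if_has_star_model has_star_model_if_minor edges_wf_if_wf_graph)

lemma wf_star: "1 \<le> n \<Longrightarrow> wf_graph (star n)"
  unfolding wf_graph_def star_def by auto

lemma sp_floor_star:
  assumes "2 \<le> n"
  shows "sp_floor (star n) = n - 2"
  unfolding sp_floor_def
proof (rule Least_equality)
  have "is_minor (star n) (star n)" unfolding is_minor_def using graph_iso_refl by blast
  moreover have "wf_graph (star n)" using assms by (intro wf_star) simp
  ultimately show "\<exists>H. wf_graph H \<and> is_minor (star n) H \<and> sp H = n - 2"
    using sp_ge_if_star_minor sp_star_le[OF assms] by (metis le_antisym)
qed (use sp_ge_if_star_minor in blast)

lemma subdivided_star_reaches_contracted_star:
  assumes e: "e \<in> {1..n}" "q \<in> {1..n}" "q \<noteq> e" and uw: "{u, w} = {0, e}"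
  shows "\<exists>A. minor_step\<^sup>*\<^sup>* (subdivided_star n e u w q) A \<and>
    same_graph \<lparr>verts = {0..n} - {w}, edges = {1..n} - {e},
      endpts = (\<lambda>f. if w \<in> {0, f} then insert u ({0, f} - {w}) else {0, f})\<rparr> A"
proof -
  let ?H = "subdivided_star n e u w q"
  let ?A = "?H\<lparr>edges := edges ?H - {e}\<rparr>"
  have uw': "(u = 0 \<and> w = e) \<or> (u = e \<and> w = 0)" using uw by (auto simp: doubleton_eq_iff)
  have "minor_step ?H ?A"
    by (rule minor_step.del_edge) (use e in \<open>simp add: subdivided_star_def\<close>)
  moreover have "minor_step ?A (?A\<lparr>verts := verts ?A - {w}\<rparr>)"
  proof (rule minor_step.del_vertex)
    show "w \<in> verts ?A" "verts ?A - {w} \<noteq> {}"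
      using e uw' by (auto simp: subdivided_star_def)
    show "\<forall>f\<in>edges ?A. w \<notin> endpts ?A f" using uw' e(1) by (auto simp: subdivided_star_def)
  qed
  moreover have "(if w \<in> {0, f} then insert u ({0, f} - {w}) else {0, f}) = {u, f}"
    if "f \<in> {1..n} - {e}" for f
    using uw' that by auto
  then have "same_graph \<lparr>verts = {0..n} - {w}, edges = {1..n} - {e},
      endpts = (\<lambda>f. if w \<in> {0, f} then insert u ({0, f} - {w}) else {0, f})\<rparr>
      (?A\<lparr>verts := verts ?A - {w}\<rparr>)"
    unfolding same_graph_def by (simp add: subdivided_star_def cong: if_cong split del: if_split)
  ultimately show ?thesis by (blast intro: rtranclp.rtrancl_into_rtrancl)
qed

lemma minor_step_star_from_low_sp:
  assumes "minor_step (star n) G1" "3 \<le> n"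
  shows "\<exists>H A. wf_graph H \<and> sp H \<le> n - 3 \<and> minor_step\<^sup>*\<^sup>* H A \<and> same_graph G1 A"
  using assms(1)
proof (cases rule: minor_step.cases)
  case (del_vertex v)
  then show ?thesis unfolding star_def using assms(2) by (cases "v = 0") auto
next
  case (del_edge e)
  define q where "q = (if e = 1 then 2 else 1 :: nat)"
  let ?H = "subdivided_star n e 0 e q"
  have e: "e \<in> {1..n}" "q \<in> {1..n}" "q \<noteq> e" using del_edge assms(2) unfolding star_def q_def by auto
  have "minor_step ?H (?H\<lparr>edges := edges ?H - {e}\<rparr>)"
    by (rule minor_step.del_edge) (use e in \<open>simp add: subdivided_star_def\<close>)
  moreover have "same_graph G1 (?H\<lparr>edges := edges ?H - {e}\<rparr>)"
    unfolding del_edge same_graph_def star_def subdivided_star_def by auto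
  ultimately show ?thesis
    using wf_subdivided_star[OF e] sp_subdivided_star_le[OF e _ assms(2)] by blast
next
  case (contract e u w)
  define q where "q = (if e = 1 then 2 else 1 :: nat)"
  have e: "e \<in> {1..n}" "q \<in> {1..n}" "q \<noteq> e" "{u, w} = {0, e}"
    using contract assms(2) unfolding star_def q_def by auto
  have "G1 = \<lparr>verts = {0..n} - {w}, edges = {1..n} - {e},
      endpts = (\<lambda>f. if w \<in> {0, f} then insert u ({0, f} - {w}) else {0, f})\<rparr>"
    unfolding contract(1) star_def by (simp cong: if_cong)
  then show ?thesis using subdivided_star_reaches_contracted_star[OF e] wf_subdivided_star[OF e]
      sp_subdivided_star_le[OF e assms(2)] by metis
qed

lemma sp_floor_proper_minor_star:
  assumes "3 \<le> n" "is_minor G (star n)" "\<not> graph_iso G (star n)"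
  shows "sp_floor G \<le> n - 3"
proof -
  obtain G' where G': "minor_step\<^sup>*\<^sup>* (star n) G'" "graph_iso G' G" using assms(2) unfolding is_minor_def by blast
  from G'(1) show ?thesis
  proof (cases rule: converse_rtranclpE)
    case base
    then show ?thesis
      using G'(2) assms(1,3) graph_iso_sym edges_wf_if_wf_graph wf_star by fastforce
  next
    case (step G1)
    then obtain H A where "wf_graph H" "sp H \<le> n - 3" "minor_step\<^sup>*\<^sup>* H A" "same_graph G1 A"
      using minor_step_star_from_low_sp assms(1) by blast
    then show ?thesis using sp_floor_le is_minor_same_graph step(2) G'(2) by (meson order_trans)
  qed
qed

theorem corollary4p5:
  fixes k :: nat
  assumes "k \<ge> 1"
  shows "sp_floor (star (k + 2)) = k \<and>
    (\<forall>G. wf_graph G \<and> is_minor G (star (k + 2)) \<and> \<not> graph_iso G (star (k + 2))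
       \<longrightarrow> sp_floor G \<noteq> k)"
  using sp_floor_star[of "k + 2"] sp_floor_proper_minor_star[of "k + 2"] assms by fastforce

end
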